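(* Let $\Gamma$ be a Taylor graph with intersection array $\{k,b,1;1,b,k\}$, eigenvalues $\theta_0>\theta_1>\theta_2>\theta_3$, and vertex set $X$. Let $x\in X$ and let $W$ be an irreducible $T(x)$-module with endpoint $1$ and local eigenvalue $\lambda\in\{\sigma,\tau\}$. Then: (i) $W$ has diameter $1$ and is thin. (ii) For any nonzero $w_0\in E^*_1(x)W$, setting $w_1=E^*_2(x)Aw_0$, the pair $\{w_0,w_1\}$ is a basis for $W$, and the matrix representing $A$ with respect to this basis is $\begin{pmatrix}\lambda & (\lambda-\theta_t)^2\\ 1 & \lambda\end{pmatrix}$, where $t=1$ if $\lambda=\sigma$ and $t=2$ if $\lambda=\tau$. (iii) $\sigma=(\theta_1+\theta_2)/2$ and $\tau=(\theta_2+\theta_3)/2$.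
   Context: A Taylor graph is a distance-regular graph with intersection array $\{k,b,1;1,b,k\}$ where $b<k-1$; it has diameter $3$. With $\mathcal{D}=(k-2b-1)^2+4k$, its eigenvalues are $\theta_0=k$, $\theta_1=\frac{k-2b-1+\sqrt{\mathcal{D}}}{2}$, $\theta_2=-1$, $\theta_3=\frac{k-2b-1-\sqrt{\mathcal{D}}}{2}$. Define $\sigma=\frac{k-2b-3+\sqrt{\mathcal{D}}}{4}$ and $\tau=\frac{k-2b-3-\sqrt{\mathcal{D}}}{4}$. Let $A$ be the adjacency matrix, $\partial$ the distance, $V=\mathbb{C}^X$, and for $0\le i\le 3$ let $E^*_i(x)$ be the diagonal matrix with $(E^*_i(x))_{yy}=1$ if $\partial(x,y)=i$ and $0$ otherwise. $T(x)$ is the subalgebra of $\mathrm{Mat}_X(\mathbb{C})$ generated by $A,E^*_0(x),\dots,E^*_3(x)$. For an irreducible $T(x)$-module $W$ (a nonzero $T(x)$-invariant subspace of $V$ with no invariant subspaces other than $0,W$), its endpoint is $\min\{i:E^*_i(x)W\neq0\}$, its diameter is $|\{i:E^*_i(x)W\ne 0\}|-1$, and $W$ is thin if $\dim E^*_i(x)W\le 1$ for all $i$. An irreducible module $W$ with endpoint $1$ has local eigenvalue $\lambda$ if $E^*_1(x)W$ is one-dimensional and consists of eigenvectors of $E^*_1(x)AE^*_1(x)$ with eigenvalue $\lambda$. *)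

theory Defs
  imports Complex_Main "HOL-Library.Function_Algebras"
begin

text \<open>A graph on a finite vertex type 'a is given by a symmetric irreflexive
  adjacency relation E.\<close>

definition edge_rel :: "('a \<Rightarrow> 'a \<Rightarrow> bool) \<Rightarrow> ('a \<times> 'a) set" where
  "edge_rel E = {(u, v). E u v}"

definition graph_connected :: "('a \<Rightarrow> 'a \<Rightarrow> bool) \<Rightarrow> bool" where
  "graph_connected E \<longleftrightarrow> (\<forall>x y. \<exists>n. (x, y) \<in> edge_rel E ^^ n)"

text \<open>Path-length distance (meaningful for connected graphs).\<close>
definition gdist :: "('a \<Rightarrow> 'a \<Rightarrow> bool) \<Rightarrow> 'a \<Rightarrow> 'a \<Rightarrow> nat" where
  "gdist E x y = (LEAST n. (x, y) \<in> edge_rel E ^^ n)"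

text \<open>Distance-regular graph with intersection array
  {b_0,...,b_(d-1); c_1,...,c_d}, given as lists bs, cs of length d = diameter.\<close>
definition DRG_with_array ::
  "('a::finite \<Rightarrow> 'a \<Rightarrow> bool) \<Rightarrow> nat list \<Rightarrow> nat list \<Rightarrow> bool" where
  "DRG_with_array E bs cs \<longleftrightarrow>
     (\<forall>x y. E x y \<longrightarrow> E y x) \<and> (\<forall>x. \<not> E x x) \<and> graph_connected E \<and>
     length bs = length cs \<and>
     (\<forall>x y. gdist E x y \<le> length bs) \<and> (\<exists>x y. gdist E x y = length bs) \<and>
     (\<forall>x y. gdist E x y < length bs \<longrightarrow>
        card {z. E y z \<and> gdist E x z = gdist E x y + 1} = bs ! gdist E x y) \<and>
     (\<forall>x y. 0 < gdist E x y \<longrightarrow>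
        card {z. E y z \<and> gdist E x z = gdist E x y - 1} = cs ! (gdist E x y - 1))"

definition taylor_graph :: "('a::finite \<Rightarrow> 'a \<Rightarrow> bool) \<Rightarrow> nat \<Rightarrow> nat \<Rightarrow> bool" where
  "taylor_graph E k b \<longleftrightarrow> b + 1 < k \<and> DRG_with_array E [k, b, 1] [1, b, k]"

definition tD :: "nat \<Rightarrow> nat \<Rightarrow> real" where
  "tD k b = (real k - 2 * real b - 1)\<^sup>2 + 4 * real k"

definition theta0 :: "nat \<Rightarrow> nat \<Rightarrow> real" where "theta0 k b = real k"
definition theta1 :: "nat \<Rightarrow> nat \<Rightarrow> real" where
  "theta1 k b = (real k - 2 * real b - 1 + sqrt (tD k b)) / 2"
definition theta2 :: "nat \<Rightarrow> nat \<Rightarrow> real" where "theta2 k b = - 1"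
definition theta3 :: "nat \<Rightarrow> nat \<Rightarrow> real" where
  "theta3 k b = (real k - 2 * real b - 1 - sqrt (tD k b)) / 2"
definition tsigma :: "nat \<Rightarrow> nat \<Rightarrow> real" where
  "tsigma k b = (real k - 2 * real b - 3 + sqrt (tD k b)) / 4"
definition ttau :: "nat \<Rightarrow> nat \<Rightarrow> real" where
  "ttau k b = (real k - 2 * real b - 3 - sqrt (tD k b)) / 4"

definition cscale :: "complex \<Rightarrow> ('a \<Rightarrow> complex) \<Rightarrow> ('a \<Rightarrow> complex)" where
  "cscale c f = (\<lambda>y. c * f y)"

interpretation fvs: vector_space "cscale :: complex \<Rightarrow> ('a \<Rightarrow> complex) \<Rightarrow> _"
  by unfold_locales (auto simp: cscale_def fun_eq_iff algebra_simps)

definition adj_op :: "('a::finite \<Rightarrow> 'a \<Rightarrow> bool) \<Rightarrow> ('a \<Rightarrow> complex) \<Rightarrow> ('a \<Rightarrow> complex)" where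
  "adj_op E v = (\<lambda>y. \<Sum>z\<in>{z. E y z}. v z)"

definition Estar :: "('a \<Rightarrow> 'a \<Rightarrow> bool) \<Rightarrow> 'a \<Rightarrow> nat \<Rightarrow> ('a \<Rightarrow> complex) \<Rightarrow> ('a \<Rightarrow> complex)" where
  "Estar E x i v = (\<lambda>y. if gdist E x y = i then v y else 0)"

inductive_set Talg :: "('a::finite \<Rightarrow> 'a \<Rightarrow> bool) \<Rightarrow> 'a \<Rightarrow>
    (('a \<Rightarrow> complex) \<Rightarrow> ('a \<Rightarrow> complex)) set"
  for E x where
  gen_A: "adj_op E \<in> Talg E x"
| gen_E: "i \<le> 3 \<Longrightarrow> Estar E x i \<in> Talg E x"
| one: "(\<lambda>v. v) \<in> Talg E x"
| add: "M \<in> Talg E x \<Longrightarrow> N \<in> Talg E x \<Longrightarrow> (\<lambda>v. M v + N v) \<in> Talg E x"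
| smult: "M \<in> Talg E x \<Longrightarrow> (\<lambda>v. cscale c (M v)) \<in> Talg E x"
| mult: "M \<in> Talg E x \<Longrightarrow> N \<in> Talg E x \<Longrightarrow> (\<lambda>v. M (N v)) \<in> Talg E x"

definition T_module :: "('a::finite \<Rightarrow> 'a \<Rightarrow> bool) \<Rightarrow> 'a \<Rightarrow> ('a \<Rightarrow> complex) set \<Rightarrow> bool" where
  "T_module E x W \<longleftrightarrow> fvs.subspace W \<and> (\<forall>M\<in>Talg E x. M ` W \<subseteq> W)"

definition irreducible_T_module ::
  "('a::finite \<Rightarrow> 'a \<Rightarrow> bool) \<Rightarrow> 'a \<Rightarrow> ('a \<Rightarrow> complex) set \<Rightarrow> bool" where
  "irreducible_T_module E x W \<longleftrightarrow> T_module E x W \<and> W \<noteq> {0} \<and>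
     (\<forall>U. T_module E x U \<and> U \<subseteq> W \<longrightarrow> U = {0} \<or> U = W)"

definition module_support :: "('a \<Rightarrow> 'a \<Rightarrow> bool) \<Rightarrow> 'a \<Rightarrow> ('a \<Rightarrow> complex) set \<Rightarrow> nat set" where
  "module_support E x W = {i. i \<le> 3 \<and> Estar E x i ` W \<noteq> {0}}"

definition module_endpoint :: "('a \<Rightarrow> 'a \<Rightarrow> bool) \<Rightarrow> 'a \<Rightarrow> ('a \<Rightarrow> complex) set \<Rightarrow> nat" where
  "module_endpoint E x W = Min (module_support E x W)"

definition module_diameter :: "('a \<Rightarrow> 'a \<Rightarrow> bool) \<Rightarrow> 'a \<Rightarrow> ('a \<Rightarrow> complex) set \<Rightarrow> nat" where
  "module_diameter E x W = card (module_support E x W) - 1"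

definition module_thin :: "('a \<Rightarrow> 'a \<Rightarrow> bool) \<Rightarrow> 'a \<Rightarrow> ('a \<Rightarrow> complex) set \<Rightarrow> bool" where
  "module_thin E x W \<longleftrightarrow> (\<forall>i\<le>3. fvs.dim (Estar E x i ` W) \<le> 1)"

definition has_local_eigenvalue ::
  "('a::finite \<Rightarrow> 'a \<Rightarrow> bool) \<Rightarrow> 'a \<Rightarrow> ('a \<Rightarrow> complex) set \<Rightarrow> complex \<Rightarrow> bool" where
  "has_local_eigenvalue E x W lam \<longleftrightarrow>
     fvs.dim (Estar E x 1 ` W) = 1 \<and>
     (\<forall>v\<in>Estar E x 1 ` W. v \<noteq> 0 \<longrightarrow>
        Estar E x 1 (adj_op E (Estar E x 1 v)) = cscale lam v)"

end

theory Submission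
  imports Defs
begin

text \<open>As E*_0 W = 0, the entries of w0
  sum to zero, and A w0 = lam w0 + w1. In a Taylor graph every vertex y has a unique antipode y'
  at distance 3, and the vertices at distance 2 from y are the neighbours of y'. With A' the
  antipodal permutation this gives J = I + A + A'A + A' and A^2 = k I + (k - b - 1) A + b A'A.
  The first identity yields w1 = -(1 + lam) A' w0; the second then gives
  A w1 = (1 + lam)^2 w0 + lam w1, because lam is a root of 2 x^2 - (k - 2b - 3) x - (k - b - 1),
  as sigma and tau are. Since tau < -1 < sigma, w1 is nonzero, so span {w0, w1} is a nonzero
  T(x)-submodule of W and hence equals W. Finally theta1 = 2 sigma + 1 and theta2 = -1 turn
  (1 + lam)^2 into (lam - theta_t)^2.\<close>

section \<open>Distance in connected graphs\<close>

locale connected_graph =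
  fixes E :: "'a \<Rightarrow> 'a \<Rightarrow> bool"
  assumes sym: "E u v \<Longrightarrow> E v u"
    and irrefl: "\<not> E u u"
    and connected: "graph_connected E"
begin

lemma edge_rel_relpow_sym: "(u, v) \<in> edge_rel E ^^ n \<Longrightarrow> (v, u) \<in> edge_rel E ^^ n"
proof (induction n arbitrary: v)
  case (Suc n)
  then obtain z where "(u, z) \<in> edge_rel E ^^ n" "E z v"
    by (auto simp: edge_rel_def)
  then show ?case
    using Suc.IH sym by (metis case_prodI edge_rel_def mem_Collect_eq relpow_Suc_I2)
qed simp

lemma gdist_path: "(u, v) \<in> edge_rel E ^^ gdist E u v"
proof -
  have "\<exists>n. (u, v) \<in> edge_rel E ^^ n"
    using connected unfolding graph_connected_def by blast
  then show ?thesis unfolding gdist_def by (rule LeastI_ex)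
qed

lemma gdist_le: "(u, v) \<in> edge_rel E ^^ n \<Longrightarrow> gdist E u v \<le> n"
  unfolding gdist_def by (rule Least_le)

lemma gdist_eq_0_iff [simp]: "gdist E u v = 0 \<longleftrightarrow> u = v"
  using gdist_path[of u v] gdist_le[of u u 0] by auto

lemma gdist_self [simp]: "gdist E u u = 0"
  by simp

lemma gdist_commute: "gdist E u v = gdist E v u"
  by (meson antisym edge_rel_relpow_sym gdist_le gdist_path)

lemma gdist_eq_1_iff: "gdist E u v = 1 \<longleftrightarrow> E u v"
proof
  show "gdist E u v = 1 \<Longrightarrow> E u v"
    using gdist_path[of u v] by (auto simp: edge_rel_def)
  assume "E u v"
  then have "gdist E u v \<le> 1" "u \<noteq> v"
    using gdist_le[of u v 1] irrefl by (auto simp: edge_rel_def)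
  then show "gdist E u v = 1"
    by (metis gdist_eq_0_iff le_antisym less_one not_le)
qed

lemma gdist_edge_le: "E v w \<Longrightarrow> gdist E u w \<le> gdist E u v + 1"
  using gdist_path[of u v] by (intro gdist_le) (auto simp: edge_rel_def)

lemma gdist_SucE:
  assumes "gdist E u w = Suc n"
  obtains v where "E v w" "gdist E u v = n"
proof -
  obtain v where v: "(u, v) \<in> edge_rel E ^^ n" "E v w"
    using gdist_path[of u w] assms by (auto simp: edge_rel_def)
  have "gdist E u v = n"
    using gdist_le[OF v(1)] gdist_edge_le[OF v(2), of u] assms by simp
  with v(2) show thesis by (rule that)
qed

end

section \<open>The standard module and submodules of T(x)\<close>

lemma adj_op_eq_sum_if:
  fixes E :: "'a::finite \<Rightarrow> 'a \<Rightarrow> bool"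
  shows "adj_op E f u = (\<Sum>v\<in>UNIV. if E u v then f v else 0)"
  by (simp add: adj_op_def sum.If_cases Int_def)

lemma adj_op_adj_op_eq_sum:
  fixes E :: "'a::finite \<Rightarrow> 'a \<Rightarrow> bool"
  shows "adj_op E (adj_op E f) u = (\<Sum>v\<in>UNIV. of_nat (card {z. E u z \<and> E z v}) * f v)"
proof -
  have "adj_op E (adj_op E f) u = (\<Sum>z\<in>UNIV. \<Sum>v\<in>UNIV. if E u z \<and> E z v then f v else 0)"
    unfolding adj_op_eq_sum_if[of E _ u] by (rule sum.cong) (auto simp: adj_op_eq_sum_if)
  also have "\<dots> = (\<Sum>v\<in>UNIV. \<Sum>z\<in>UNIV. if E u z \<and> E z v then f v else 0)"
    by (rule sum.swap)
  also have "\<dots> = (\<Sum>v\<in>UNIV. of_nat (card {z. E u z \<and> E z v}) * f v)"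
    by (simp add: sum.If_cases Int_def)
  finally show ?thesis .
qed

lemma module_hom_adj_op: "module_hom cscale cscale (adj_op (E :: 'a::finite \<Rightarrow> 'a \<Rightarrow> bool))"
  by unfold_locales (simp_all add: adj_op_def cscale_def fun_eq_iff sum.distrib sum_distrib_left)

lemma module_hom_Estar: "module_hom cscale cscale (Estar E x i)"
  by unfold_locales (simp_all add: Estar_def cscale_def fun_eq_iff)

lemma Estar_Estar: "Estar E x i (Estar E x j v) = (if i = j then Estar E x j v else 0)"
  by (auto simp: Estar_def fun_eq_iff)

lemma span_invariant:
  assumes "module_hom cscale cscale f" "f ` S \<subseteq> fvs.span S"
  shows "f ` fvs.span S \<subseteq> fvs.span S"
proof -
  have "f ` fvs.span S = fvs.span (f ` S)"
    using module_hom.span_image[OF assms(1)] by simp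
  also have "\<dots> \<subseteq> fvs.span S"
    using fvs.span_mono[OF assms(2)] fvs.span_span by blast
  finally show ?thesis .
qed

lemma span_singleton_eq_0_iff: "fvs.span {v} = {0} \<longleftrightarrow> v = 0"
  using fvs.span_base[of v "{v}"] by auto

lemma dim_singleton_le: "fvs.dim {v} \<le> 1"
  using fvs.dim_le_card[of "{v}" "{v}"] fvs.span_base[of v "{v}"] by simp

lemma Talg_invariant:
  assumes "fvs.subspace U" "adj_op E ` U \<subseteq> U" "\<And>i. Estar E x i ` U \<subseteq> U"
    and "M \<in> Talg E x"
  shows "M ` U \<subseteq> U"
  using assms(4)
proof induction
  case (add M N)
  then show ?case
    using fvs.subspace_add[OF assms(1)] by (auto simp: plus_fun_def)
next
  case (smult M c)
  then show ?case
    using fvs.subspace_scale[OF assms(1)] by auto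
qed (use assms(2,3) in auto)

lemma T_module_span:
  assumes "adj_op E ` S \<subseteq> fvs.span S" "\<And>i. Estar E x i ` S \<subseteq> fvs.span S"
  shows "T_module E x (fvs.span S)"
  unfolding T_module_def
  using Talg_invariant[OF fvs.subspace_span span_invariant[OF module_hom_adj_op assms(1)]
      span_invariant[OF module_hom_Estar assms(2)]]
  by blast

lemma independent_Estar_pair:
  assumes "Estar E x i u = u" "Estar E x j v = v" "i \<noteq> j" "u \<noteq> 0" "v \<noteq> 0"
  shows "fvs.independent {u, v}"
proof -
  have "u \<notin> fvs.span {v}"
  proof
    assume "u \<in> fvs.span {v}"
    then obtain c where "u = cscale c v"
      by (auto simp: fvs.span_singleton)
    then have "Estar E x i u = cscale c (Estar E x i (Estar E x j v))"
      using assms(2) by (simp add: module_hom.scale[OF module_hom_Estar])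
    then show False
      using assms(1,3,4) by (simp add: Estar_Estar cscale_def fun_eq_iff)
  qed
  then show ?thesis
    using assms(5) by (simp add: fvs.independent_insertI)
qed

section \<open>Taylor graphs\<close>

lemma double_counting:
  assumes "finite S" "finite T"
  shows "(\<Sum>y\<in>S. card {z\<in>T. R y z}) = (\<Sum>z\<in>T. card {y\<in>S. R y z})"
proof -
  have "(\<Sum>y\<in>S. card {z\<in>T. R y z}) = (\<Sum>y\<in>S. \<Sum>z\<in>T. if R y z then 1 else 0)"
    using assms by (simp add: sum.If_cases Int_def)
  also have "\<dots> = (\<Sum>z\<in>T. \<Sum>y\<in>S. if R y z then 1 else 0)"
    by (rule sum.swap)
  also have "\<dots> = (\<Sum>z\<in>T. card {y\<in>S. R y z})"
    using assms by (simp add: sum.If_cases Int_def)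
  finally show ?thesis .
qed

locale taylor =
  fixes E :: "'a::finite \<Rightarrow> 'a \<Rightarrow> bool" and k b :: nat
  assumes taylor: "taylor_graph E k b"
begin

sublocale connected_graph E
  using taylor unfolding taylor_graph_def DRG_with_array_def by unfold_locales blast+

lemma b_plus_1_less_k: "b + 1 < k"
  using taylor unfolding taylor_graph_def by blast

lemma gdist_le_3: "gdist E u v \<le> 3"
  using taylor unfolding taylor_graph_def DRG_with_array_def by (auto simp: numeral_3_eq_3)

lemma ex_gdist_3: "\<exists>u v. gdist E u v = 3"
  using taylor unfolding taylor_graph_def DRG_with_array_def by (auto simp: numeral_3_eq_3)

lemma card_neighbours_farther:
  "gdist E u v < 3 \<Longrightarrow>
    card {z. E v z \<and> gdist E u z = gdist E u v + 1} = [k, b, 1] ! gdist E u v"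
  using taylor unfolding taylor_graph_def DRG_with_array_def by auto

lemma card_neighbours_closer:
  "0 < gdist E u v \<Longrightarrow>
    card {z. E v z \<and> gdist E u z = gdist E u v - 1} = [1, b, k] ! (gdist E u v - 1)"
  using taylor unfolding taylor_graph_def DRG_with_array_def by auto

lemma card_neighbours: "card {v. E u v} = k"
  using card_neighbours_farther[of u u] by (simp add: gdist_eq_1_iff[unfolded One_nat_def])

lemma intersection_number_b1: "gdist E u v = 1 \<Longrightarrow> card {z. E v z \<and> gdist E u z = 2} = b"
  using card_neighbours_farther[of u v] by (simp add: numeral_2_eq_2)

lemma intersection_number_b2: "gdist E u v = 2 \<Longrightarrow> card {z. E v z \<and> gdist E u z = 3} = 1"
  using card_neighbours_farther[of u v] by simp

lemma intersection_number_c2: "gdist E u v = 2 \<Longrightarrow> card {z. E v z \<and> gdist E u z = 1} = b"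
  using card_neighbours_closer[of u v] by simp

lemma intersection_number_c3: "gdist E u v = 3 \<Longrightarrow> card {z. E v z \<and> gdist E u z = 2} = k"
  using card_neighbours_closer[of u v] by simp

lemma neighbour_of_gdist_3:
  assumes "gdist E u v = 3" "E v z"
  shows "gdist E u z = 2"
proof -
  have "{z. E v z \<and> gdist E u z = 2} = {z. E v z}"
    using intersection_number_c3[OF assms(1)] card_neighbours
    by (intro card_subset_eq) auto
  with assms(2) show ?thesis by blast
qed

lemma b_pos: "0 < b"
proof -
  obtain u v where "gdist E u v = 3" using ex_gdist_3 by blast
  then obtain w where w: "gdist E u w = 2"
    by (metis gdist_SucE numeral_3_eq_3 numeral_2_eq_2)
  then obtain z where "E z w" "gdist E u z = 1"
    by (metis gdist_SucE numeral_2_eq_2 One_nat_def)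
  then have "{z. E w z \<and> gdist E u z = 1} \<noteq> {}" using sym by blast
  then show ?thesis using intersection_number_c2[OF w] card_gt_0_iff by fastforce
qed

lemma card_sphere_1: "card {v. gdist E u v = 1} = k"
  using card_neighbours by (simp add: gdist_eq_1_iff[unfolded One_nat_def])

lemma card_sphere_2: "card {v. gdist E u v = 2} = k"
proof -
  have "(\<Sum>y\<in>{v. gdist E u v = 1}. card {z\<in>{v. gdist E u v = 2}. E y z}) =
        (\<Sum>z\<in>{v. gdist E u v = 2}. card {y\<in>{v. gdist E u v = 1}. E y z})"
    by (rule double_counting) simp_all
  moreover have "card {z\<in>{v. gdist E u v = 2}. E y z} = b" if "gdist E u y = 1" for y
    using intersection_number_b1[OF that] by (simp add: conj_commute)
  moreover have "card {y\<in>{v. gdist E u v = 1}. E y z} = b" if "gdist E u z = 2" for z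
  proof -
    have "{y\<in>{v. gdist E u v = 1}. E y z} = {y. E z y \<and> gdist E u y = 1}"
      using sym by blast
    then show ?thesis using intersection_number_c2[OF that] by simp
  qed
  ultimately have "card {v. gdist E u v = 1} * b = card {v. gdist E u v = 2} * b"
    by simp
  then show ?thesis
    using b_pos card_sphere_1 by simp
qed

lemma card_sphere_3: "card {v. gdist E u v = 3} = 1"
proof -
  have "(\<Sum>y\<in>{v. gdist E u v = 2}. card {z\<in>{v. gdist E u v = 3}. E y z}) =
        (\<Sum>z\<in>{v. gdist E u v = 3}. card {y\<in>{v. gdist E u v = 2}. E y z})"
    by (rule double_counting) simp_all
  moreover have "card {z\<in>{v. gdist E u v = 3}. E y z} = 1" if "gdist E u y = 2" for y
    using intersection_number_b2[OF that] by (simp add: conj_commute)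
  moreover have "card {y\<in>{v. gdist E u v = 2}. E y z} = k" if "gdist E u z = 3" for z
  proof -
    have "{y\<in>{v. gdist E u v = 2}. E y z} = {y. E z y \<and> gdist E u y = 2}"
      using sym by blast
    then show ?thesis using intersection_number_c3[OF that] by simp
  qed
  ultimately have "card {v. gdist E u v = 2} = card {v. gdist E u v = 3} * k"
    by simp
  then show ?thesis
    using b_plus_1_less_k card_sphere_2 by simp
qed

definition antipode :: "'a \<Rightarrow> 'a" where
  "antipode u = (THE v. gdist E u v = 3)"

lemma gdist_3_iff_antipode: "gdist E u v = 3 \<longleftrightarrow> v = antipode u"
proof -
  obtain w where "{v. gdist E u v = 3} = {w}"
    using card_sphere_3 card_1_singletonE by blast
  then have w: "gdist E u v = 3 \<longleftrightarrow> v = w" for v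
    by blast
  then have "antipode u = w"
    unfolding antipode_def by blast
  with w show ?thesis by simp
qed

lemma gdist_antipode [simp]: "gdist E u (antipode u) = 3"
  by (simp add: gdist_3_iff_antipode)

lemma antipode_antipode [simp]: "antipode (antipode u) = u"
  by (metis gdist_3_iff_antipode gdist_antipode gdist_commute)

lemma gdist_2_iff_adjacent_antipode: "gdist E u v = 2 \<longleftrightarrow> E (antipode u) v"
proof -
  have "{v. E (antipode u) v} = {v. gdist E u v = 2}"
    using neighbour_of_gdist_3[OF gdist_antipode] card_neighbours card_sphere_2
    by (intro card_subset_eq) auto
  then show ?thesis by blast
qed

lemma adjacent_antipode_iff: "E v (antipode u) \<longleftrightarrow> gdist E u v = 2"
  using gdist_2_iff_adjacent_antipode sym by blast

lemma sum_UNIV_spheres: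
  "(\<Sum>v\<in>UNIV. h v) =
    h u + (\<Sum>v | E u v. h v) + (\<Sum>v | E (antipode u) v. h v) + h (antipode u)"
proof -
  have "(\<Sum>v\<in>UNIV. h v) = (\<Sum>i\<le>3. \<Sum>v | gdist E u v = i. h v)"
    using gdist_le_3[of u] by (subst sum.group[symmetric, of UNIV "{..3}" "gdist E u"]) auto
  also have "\<dots> = (\<Sum>v | gdist E u v = 0. h v) + (\<Sum>v | gdist E u v = 1. h v) +
      (\<Sum>v | gdist E u v = 2. h v) + (\<Sum>v | gdist E u v = 3. h v)"
    by (simp add: numeral_3_eq_3 numeral_2_eq_2)
  also have "\<dots> = h u + (\<Sum>v | E u v. h v) + (\<Sum>v | E (antipode u) v. h v) + h (antipode u)"
    by (simp add: gdist_eq_1_iff[unfolded One_nat_def] gdist_2_iff_adjacent_antipode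
        gdist_3_iff_antipode)
  finally show ?thesis .
qed

lemma card_common_neighbours:
  "card {z. E u z \<and> E z v} = [k, k - b - 1, b, 0] ! gdist E u v"
proof -
  consider "gdist E u v = 0" | "gdist E u v = 1" | "gdist E u v = 2" | "gdist E u v = 3"
    using gdist_le_3[of u v] by linarith
  then show ?thesis
  proof cases
    case 1
    then have "{z. E u z \<and> E z v} = {z. E u z}"
      using sym by auto
    with 1 show ?thesis by (simp add: card_neighbours)
  next
    case 2
    have common: "{z. E u z \<and> E z v} = {z. E v z \<and> gdist E u z = 1}"
      using sym gdist_eq_1_iff by blast
    have "{z. E v z} = insert u ({z. E v z \<and> gdist E u z = 1} \<union> {z. E v z \<and> gdist E u z = 2})"
      using gdist_edge_le[of v _ u] 2 sym gdist_eq_1_iff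
      by (fastforce simp: le_Suc_eq numeral_2_eq_2)
    then have "k = 1 + card {z. E u z \<and> E z v} + b"
      using card_neighbours[of v] intersection_number_b1[OF 2] irrefl
      by (simp add: common card_Un_disjoint disjoint_iff)
    with 2 show ?thesis by simp
  next
    case 3
    then have "{z. E u z \<and> E z v} = {z. E v z \<and> gdist E u z = 1}"
      using sym gdist_eq_1_iff by blast
    with 3 show ?thesis using intersection_number_c2[OF 3] by simp
  next
    case 4
    have "\<not> (E u z \<and> E z v)" for z
      using 4 gdist_edge_le[of z v u] gdist_eq_1_iff[of u z] by auto
    then have "{z. E u z \<and> E z v} = {}"
      by blast
    with 4 show ?thesis by simp
  qed
qed

lemma sum_UNIV_adj_op_antipode:
  "(\<Sum>v\<in>UNIV. f v) = f u + adj_op E f u + adj_op E f (antipode u) + f (antipode u)"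
  unfolding adj_op_def by (rule sum_UNIV_spheres)

lemma adj_op_square:
  "adj_op E (adj_op E f) u =
    of_nat k * f u + (of_nat k - of_nat b - 1) * adj_op E f u + of_nat b * adj_op E f (antipode u)"
proof -
  define c :: "nat \<Rightarrow> complex" where "c i = of_nat ([k, k - b - 1, b, 0] ! i)" for i
  have "adj_op E (adj_op E f) u = (\<Sum>v\<in>UNIV. c (gdist E u v) * f v)"
    by (simp add: adj_op_adj_op_eq_sum card_common_neighbours c_def)
  also have "\<dots> = c 0 * f u + (\<Sum>v | E u v. c 1 * f v) + (\<Sum>v | E (antipode u) v. c 2 * f v)
      + c 3 * f (antipode u)"
  proof -
    have "(\<Sum>v | E u v. c (gdist E u v) * f v) = (\<Sum>v | E u v. c 1 * f v)"
      by (rule sum.cong) (simp_all add: gdist_eq_1_iff[THEN iffD2])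
    moreover have
      "(\<Sum>v | E (antipode u) v. c (gdist E u v) * f v) = (\<Sum>v | E (antipode u) v. c 2 * f v)"
      by (rule sum.cong) (simp_all add: gdist_2_iff_adjacent_antipode[THEN iffD2])
    ultimately show ?thesis
      by (subst sum_UNIV_spheres[of _ u]) simp
  qed
  also have "\<dots> = of_nat k * f u + (of_nat k - of_nat b - 1) * adj_op E f u
      + of_nat b * adj_op E f (antipode u)"
    using b_plus_1_less_k
    by (simp add: c_def adj_op_def of_nat_diff sum_distrib_left numeral_2_eq_2 numeral_3_eq_3
        diff_diff_eq add.commute)
  finally show ?thesis .
qed

section \<open>Local eigenvectors\<close>

context
  fixes x :: 'a and w0 :: "'a \<Rightarrow> complex" and lam :: complex
  assumes w0_supp: "Estar E x 1 w0 = w0"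
    and w0_sum: "(\<Sum>v\<in>UNIV. w0 v) = 0"
    and w0_local_eig: "Estar E x 1 (adj_op E w0) = cscale lam w0"
begin

abbreviation "w1 \<equiv> Estar E x 2 (adj_op E w0)"

lemma w0_eq_0: "gdist E x v \<noteq> 1 \<Longrightarrow> w0 v = 0"
  using fun_cong[OF w0_supp, of v] by (simp add: Estar_def)

lemma w1_eq_0: "gdist E x v \<noteq> 2 \<Longrightarrow> w1 v = 0"
  by (simp add: Estar_def)

lemma adj_op_w0: "adj_op E w0 = cscale lam w0 + w1"
proof
  fix y
  have at_antipode: "adj_op E w0 (antipode x) = 0"
    unfolding adj_op_def
    by (intro sum.neutral) (auto simp: gdist_2_iff_adjacent_antipode[symmetric] intro: w0_eq_0)
  have "adj_op E w0 x = 0"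
    using sum_UNIV_adj_op_antipode[of w0 x] w0_sum at_antipode w0_eq_0[of x] w0_eq_0[of "antipode x"]
    by simp
  moreover have "adj_op E w0 y = lam * w0 y" if "gdist E x y = 1"
    using fun_cong[OF w0_local_eig, of y] that by (simp add: Estar_def cscale_def)
  ultimately show "adj_op E w0 y = (cscale lam w0 + w1) y"
    using gdist_le_3[of x y] at_antipode w0_eq_0[of y] gdist_3_iff_antipode[of x y]
    by (cases "gdist E x y") (auto simp: Estar_def cscale_def numeral_3_eq_3 le_Suc_eq)
qed

lemma adj_op_w0_apply: "adj_op E w0 v = lam * w0 v + w1 v"
  by (subst adj_op_w0) (simp add: cscale_def)

text \<open>At a vertex y at distance 2 from x, the decomposition \<open>J = I + A + A' A + A'\<close> of
  \<open>sum_UNIV_adj_op_antipode\<close> (\<open>A'\<close> the antipodal permutation) turns \<open>J w0 = 0\<close>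
  into this relation; at all other vertices both sides vanish.\<close>

lemma w1_antipode: "w1 y = - (1 + lam) * w0 (antipode y)"
proof (cases "gdist E x y = 2")
  case True
  then have "E (antipode y) x"
    using adjacent_antipode_iff[of x y] gdist_commute sym by metis
  then have "gdist E x (antipode y) = 1"
    using gdist_eq_1_iff sym by blast
  then have "w1 (antipode y) = 0"
    using w1_eq_0 by simp
  then have "w1 y + (1 + lam) * w0 (antipode y) = 0"
    using sum_UNIV_adj_op_antipode[of w0 y] w0_sum w0_eq_0[of y] True adj_op_w0_apply[of y]
      adj_op_w0_apply[of "antipode y"]
    by (simp add: algebra_simps)
  then show ?thesis
    unfolding mult_minus_left eq_neg_iff_add_eq_0 .
next
  case False
  then have "\<not> E x (antipode y)"
    using adjacent_antipode_iff gdist_commute by metis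
  then show ?thesis
    using False w1_eq_0 w0_eq_0[of "antipode y"] gdist_eq_1_iff by simp
qed

lemma adj_op_w1:
  assumes root: "2 * lam\<^sup>2 - (of_nat k - 2 * of_nat b - 3) * lam - (of_nat k - of_nat b - 1) = 0"
  shows "adj_op E w1 = cscale ((1 + lam)\<^sup>2) w0 + cscale lam w1"
proof
  fix y
  let ?p = "w0 y" and ?r = "w0 (antipode y)"
  have "w1 = adj_op E w0 - cscale lam w0"
    by (metis adj_op_w0 add_diff_cancel_left')
  then have "adj_op E w1 = adj_op E (adj_op E w0) - cscale lam (adj_op E w0)"
    by (simp add: module_hom.diff[OF module_hom_adj_op] module_hom.scale[OF module_hom_adj_op])
  then have "adj_op E w1 y = adj_op E (adj_op E w0) y - lam * adj_op E w0 y"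
    by (simp add: cscale_def)
  also have "\<dots> = (1 + lam)\<^sup>2 * ?p + lam * w1 y +
      (?r - ?p) * (2 * lam\<^sup>2 - (of_nat k - 2 * of_nat b - 3) * lam - (of_nat k - of_nat b - 1))"
    unfolding adj_op_square adj_op_w0_apply w1_antipode[of y] w1_antipode[of "antipode y"]
    by (simp add: algebra_simps power2_eq_square)
  finally show "adj_op E w1 y = (cscale ((1 + lam)\<^sup>2) w0 + cscale lam w1) y"
    using root by (simp add: cscale_def)
qed

lemma w1_ne_0:
  assumes "w0 \<noteq> 0" "lam \<noteq> - 1"
  shows "w1 \<noteq> 0"
proof
  obtain t where "w0 t \<noteq> 0"
    using assms(1) by (auto simp: fun_eq_iff)
  moreover assume "w1 = 0"
  then have "- (1 + lam) * w0 t = 0"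
    using w1_antipode[of "antipode t"] by simp
  ultimately show False
    using assms(2) by auto
qed

end

section \<open>Irreducible modules with endpoint 1\<close>

context
  fixes x :: 'a and W :: "('a \<Rightarrow> complex) set" and lam :: complex
  assumes irreducible: "irreducible_T_module E x W"
    and endpoint: "module_endpoint E x W = 1"
    and local_eigenvalue: "has_local_eigenvalue E x W lam"
begin

lemma Talg_closed: "M \<in> Talg E x \<Longrightarrow> v \<in> W \<Longrightarrow> M v \<in> W"
  using irreducible unfolding irreducible_T_module_def T_module_def by blast

lemma Estar_0_image: "Estar E x 0 ` W = {0}"
proof (rule ccontr)
  assume "Estar E x 0 ` W \<noteq> {0}"
  then have "0 \<in> module_support E x W"
    unfolding module_support_def by simp
  then have "module_endpoint E x W = 0"
    unfolding module_endpoint_def module_support_def by (intro Min_eqI) auto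
  with endpoint show False by simp
qed

lemma Estar_1_image_local_eigenvector:
  assumes "w0 \<in> Estar E x 1 ` W" "w0 \<noteq> 0"
  shows "Estar E x 1 w0 = w0" "(\<Sum>v\<in>UNIV. w0 v) = 0"
    and "Estar E x 1 (adj_op E w0) = cscale lam w0"
proof -
  obtain w where w: "w \<in> W" "w0 = Estar E x 1 w"
    using assms(1) by blast
  then show supp: "Estar E x 1 w0 = w0"
    by (simp add: Estar_Estar)
  then show "Estar E x 1 (adj_op E w0) = cscale lam w0"
    using local_eigenvalue assms unfolding has_local_eigenvalue_def by metis
  have "adj_op E w0 \<in> W"
    unfolding w(2) by (rule Talg_closed[OF Talg.gen_A Talg_closed[OF Talg.gen_E w(1)]]) simp
  then have "Estar E x 0 (adj_op E w0) = 0"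
    using Estar_0_image by blast
  then have "adj_op E w0 x = 0"
    by (auto simp: Estar_def fun_eq_iff dest: spec[of _ x])
  moreover have "w0 v = 0" if "\<not> E x v" for v
    using fun_cong[OF supp, of v] that gdist_eq_1_iff[of x v] by (auto simp: Estar_def)
  then have "adj_op E w0 x = (\<Sum>v\<in>UNIV. w0 v)"
    unfolding adj_op_def by (intro sum.mono_neutral_left) auto
  ultimately show "(\<Sum>v\<in>UNIV. w0 v) = 0"
    by simp
qed

lemma ex_nonzero_Estar_1_image: "\<exists>w0\<in>Estar E x 1 ` W. w0 \<noteq> 0"
proof (rule ccontr)
  assume "\<not> ?thesis"
  then have "Estar E x 1 ` W \<subseteq> fvs.span {}"
    by auto
  then have "fvs.dim (Estar E x 1 ` W) \<le> card ({} :: ('a \<Rightarrow> complex) set)"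
    by (intro fvs.dim_le_card) simp_all
  with local_eigenvalue show False
    unfolding has_local_eigenvalue_def by simp
qed

context
  assumes root: "2 * lam\<^sup>2 - (of_nat k - 2 * of_nat b - 3) * lam - (of_nat k - of_nat b - 1) = 0"
    and lam_ne: "lam \<noteq> - 1"
begin

lemma span_w0_w1_eq_module:
  assumes "w0 \<in> Estar E x 1 ` W" "w0 \<noteq> 0"
  shows "fvs.span {w0, w1 x w0} = W"
proof -
  let ?w1 = "w1 x w0"
  let ?U = "fvs.span {w0, ?w1}"
  note local = Estar_1_image_local_eigenvector[OF assms]
  have in_U: "w0 \<in> ?U" "?w1 \<in> ?U"
    by (simp_all add: fvs.span_base)
  have "adj_op E w0 \<in> ?U" "adj_op E ?w1 \<in> ?U"
    by (subst adj_op_w0[OF local] adj_op_w1[OF local root];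
        intro fvs.span_add fvs.span_scale in_U)+
  moreover have "Estar E x i w0 \<in> ?U" "Estar E x i ?w1 \<in> ?U" for i
    using in_U fvs.span_zero local(1) Estar_Estar[of E x i 1 w0] Estar_Estar[of E x i 2]
    by auto
  ultimately have "T_module E x ?U"
    by (intro T_module_span) auto
  obtain w where "w \<in> W" "w0 = Estar E x 1 w"
    using assms(1) by blast
  then have "w0 \<in> W"
    using Talg_closed[OF Talg.gen_E[of 1]] by simp
  moreover have "?w1 \<in> W"
    using Talg_closed[OF Talg.gen_E[of 2] Talg_closed[OF Talg.gen_A \<open>w0 \<in> W\<close>]] by simp
  moreover have "fvs.subspace W"
    using irreducible unfolding irreducible_T_module_def T_module_def by blast
  ultimately have "?U \<subseteq> W"
    by (intro fvs.span_minimal) auto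
  moreover have "?U \<noteq> {0}"
    using assms(2) in_U(1) by auto
  ultimately show ?thesis
    using \<open>T_module E x ?U\<close> irreducible unfolding irreducible_T_module_def by blast
qed

lemma module_basis:
  assumes "w0 \<in> Estar E x 1 ` W" "w0 \<noteq> 0"
  shows "w0 \<noteq> w1 x w0 \<and> fvs.independent {w0, w1 x w0} \<and> fvs.span {w0, w1 x w0} = W \<and>
    adj_op E w0 = cscale lam w0 + w1 x w0 \<and>
    adj_op E (w1 x w0) = cscale ((1 + lam)\<^sup>2) w0 + cscale lam (w1 x w0)"
proof -
  note local = Estar_1_image_local_eigenvector[OF assms(1,2)]
  have "w1 x w0 \<noteq> 0"
    using w1_ne_0[OF local assms(2) lam_ne] .
  moreover have "fvs.independent {w0, w1 x w0}"
    using local(1) \<open>w1 x w0 \<noteq> 0\<close> assms(2)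
    by (intro independent_Estar_pair[of E x 1 _ 2]) (simp_all add: Estar_Estar)
  moreover have "Estar E x 1 (w1 x w0) = 0"
    by (simp add: Estar_Estar)
  then have "w0 \<noteq> w1 x w0"
    using local(1) assms(2) by auto
  ultimately show ?thesis
    using span_w0_w1_eq_module[OF assms(1,2)] adj_op_w0[OF local] adj_op_w1[OF local root] by blast
qed

lemma Estar_image:
  assumes "w0 \<in> Estar E x 1 ` W" "w0 \<noteq> 0"
  shows "Estar E x i ` W =
    fvs.span {if i = 1 then w0 else if i = 2 then w1 x w0 else 0}"
proof -
  let ?w1 = "w1 x w0"
  have "Estar E x i ` W = Estar E x i ` fvs.span {w0, ?w1}"
    using span_w0_w1_eq_module[OF assms] by simp
  also have "\<dots> = fvs.span {Estar E x i w0, Estar E x i ?w1}"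
    by (simp add: module_hom.span_image[OF module_hom_Estar, symmetric])
  also have "{Estar E x i w0, Estar E x i ?w1} =
      {if i = 1 then w0 else 0, if i = 2 then ?w1 else 0}"
    using Estar_1_image_local_eigenvector(1)[OF assms] Estar_Estar[of E x i 1 w0] Estar_Estar[of E x i 2]
    by simp
  finally show ?thesis
    by (cases "i = 1 \<or> i = 2") (auto simp: insert_commute)
qed

lemma module_support_eq: "module_support E x W = {1, 2}"
proof -
  obtain w0 where w0: "w0 \<in> Estar E x 1 ` W" "w0 \<noteq> 0"
    using ex_nonzero_Estar_1_image by blast
  have "w1 x w0 \<noteq> 0"
    using w1_ne_0[OF Estar_1_image_local_eigenvector[OF w0] w0(2) lam_ne] .
  then show ?thesis
    using w0(2) unfolding module_support_def Estar_image[OF w0] span_singleton_eq_0_iff by auto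
qed

lemma module_thin: "module_thin E x W"
proof -
  obtain w0 where w0: "w0 \<in> Estar E x 1 ` W" "w0 \<noteq> 0"
    using ex_nonzero_Estar_1_image by blast
  show ?thesis
    unfolding module_thin_def Estar_image[OF w0] fvs.dim_span using dim_singleton_le by blast
qed

end

end

end

section \<open>The eigenvalue parameters\<close>

lemma tsigma_ttau_root:
  assumes "l = tsigma k b \<or> l = ttau k b"
  shows "2 * l\<^sup>2 - (real k - 2 * real b - 3) * l - (real k - real b - 1) = 0"
proof -
  define s where "s = sqrt (tD k b)"
  have s2: "s\<^sup>2 = (real k - 2 * real b - 1)\<^sup>2 + 4 * real k"
    unfolding s_def tD_def by simp
  from assms consider "l = (real k - 2 * real b - 3 + s) / 4" | "l = (real k - 2 * real b - 3 - s) / 4"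
    unfolding tsigma_def ttau_def s_def by blast
  then have "2 * l\<^sup>2 - (real k - 2 * real b - 3) * l - (real k - real b - 1)
      = (s\<^sup>2 - (real k - 2 * real b - 3)\<^sup>2) / 8 - (real k - real b - 1)"
  proof cases
    case 1
    show ?thesis unfolding 1 by (simp add: field_simps power2_eq_square)
  next
    case 2
    show ?thesis unfolding 2 by (simp add: field_simps power2_eq_square)
  qed
  then show ?thesis
    unfolding s2 by (simp add: field_simps power2_eq_square)
qed

lemma sqrt_tD_gt:
  assumes "0 < b"
  shows "\<bar>real k - 2 * real b + 1\<bar> < sqrt (tD k b)"
proof -
  have "(real k - 2 * real b + 1)\<^sup>2 < tD k b"
    using assms unfolding tD_def by (simp add: power2_eq_square algebra_simps)
  then show ?thesis
    using real_sqrt_less_mono by fastforce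
qed

lemma tsigma_gt_neg_1: "0 < b \<Longrightarrow> - 1 < tsigma k b"
  using sqrt_tD_gt[of b k] unfolding tsigma_def abs_less_iff by simp

lemma ttau_lt_neg_1: "0 < b \<Longrightarrow> ttau k b < - 1"
  using sqrt_tD_gt[of b k] unfolding ttau_def abs_less_iff by simp

lemma tsigma_eq_mean: "tsigma k b = (theta1 k b + theta2 k b) / 2"
  unfolding tsigma_def theta1_def theta2_def by (simp add: field_simps)

lemma ttau_eq_mean: "ttau k b = (theta2 k b + theta3 k b) / 2"
  unfolding ttau_def theta2_def theta3_def by (simp add: field_simps)

lemma local_eigenvalue_root:
  assumes "lam = complex_of_real (tsigma k b) \<or> lam = complex_of_real (ttau k b)"
  shows "2 * lam\<^sup>2 - (of_nat k - 2 * of_nat b - 3) * lam - (of_nat k - of_nat b - 1) = 0"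
proof -
  obtain l where l: "lam = complex_of_real l" "l = tsigma k b \<or> l = ttau k b"
    using assms by blast
  have "complex_of_real (2 * l\<^sup>2 - (real k - 2 * real b - 3) * l - (real k - real b - 1)) = 0"
    using tsigma_ttau_root[OF l(2)] by simp
  then show ?thesis
    unfolding l(1) by simp
qed

lemma local_eigenvalue_ne_neg_1:
  assumes "lam = complex_of_real (tsigma k b) \<or> lam = complex_of_real (ttau k b)" "0 < b"
  shows "lam \<noteq> - 1"
proof -
  have "tsigma k b \<noteq> - 1" "ttau k b \<noteq> - 1"
    using tsigma_gt_neg_1[of b k, OF assms(2)] ttau_lt_neg_1[of b k, OF assms(2)] by linarith+
  with assms(1) show ?thesis
    by (metis of_real_1 of_real_eq_iff of_real_minus)
qed

lemma square_sub_theta: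
  "(lam - complex_of_real (if lam = complex_of_real (tsigma k b) then theta1 k b else theta2 k b))\<^sup>2
    = (1 + lam)\<^sup>2"
proof (cases "lam = complex_of_real (tsigma k b)")
  case True
  have "theta1 k b = 2 * tsigma k b + 1"
    using tsigma_eq_mean[of k b] by (simp add: theta2_def)
  then have "complex_of_real (theta1 k b) = 2 * lam + 1"
    using True by simp
  with True show ?thesis
    by (simp add: power2_eq_square algebra_simps)
qed (simp add: theta2_def add.commute)

theorem lemma7p3:
  fixes E :: "'a::finite \<Rightarrow> 'a \<Rightarrow> bool" and k b :: nat and x :: 'a
    and W :: "('a \<Rightarrow> complex) set" and lam :: complex
  assumes "taylor_graph E k b"
    and "irreducible_T_module E x W"
    and "module_endpoint E x W = 1"
    and "lam = complex_of_real (tsigma k b) \<or> lam = complex_of_real (ttau k b)"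
    and "has_local_eigenvalue E x W lam"
  shows "module_diameter E x W = 1 \<and> module_thin E x W \<and>
    (\<forall>w0\<in>Estar E x 1 ` W. w0 \<noteq> 0 \<longrightarrow>
       (let w1 = Estar E x 2 (adj_op E w0);
            th = (if lam = complex_of_real (tsigma k b) then theta1 k b else theta2 k b)
        in w0 \<noteq> w1 \<and> fvs.independent {w0, w1} \<and> fvs.span {w0, w1} = W \<and>
           adj_op E w0 = cscale lam w0 + w1 \<and>
           adj_op E w1 = cscale ((lam - complex_of_real th)\<^sup>2) w0 + cscale lam w1)) \<and>
    tsigma k b = (theta1 k b + theta2 k b) / 2 \<and>
    ttau k b = (theta2 k b + theta3 k b) / 2"
proof -
  interpret taylor E k b
    by (rule taylor.intro) (rule assms(1))
  note module = assms(2,3,5) local_eigenvalue_root[OF assms(4)]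
    local_eigenvalue_ne_neg_1[OF assms(4) b_pos]
  show ?thesis
    unfolding Let_def square_sub_theta module_diameter_def module_support_eq[OF module]
    using module_thin[OF module] module_basis[OF module] tsigma_eq_mean ttau_eq_mean by simp
qed

end
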